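(* Let $\mathbf{A}\in\mathbb{R}^{(\ell m)\times(qn)}$ be a block matrix with $\ell\times q$ blocks of size $m\times n$, and let $\mathbf{B}=\mathbf{S}_{\ell,m}\mathbf{A}\mathbf{S}_{q,n}^\top$, viewed as an $m\times n$ grid of blocks of size $\ell\times q$. Let $\mathbf{A}_1,\dots,\mathbf{A}_p$ be the distinct nonzero blocks of $\mathbf{A}$, with $\eta_k$ the number of block positions of $\mathbf{A}$ at which $\mathbf{A}_k$ occurs, and $\mathbf{B}_1,\dots,\mathbf{B}_\rho$ the distinct nonzero blocks of $\mathbf{B}$, with $\xi_\kappa$ the number of block positions of $\mathbf{B}$ at which $\mathbf{B}_\kappa$ occurs. Let $C_k=\{(i,j)\in[m]\times[n]:[\mathbf{A}_k]_{ij}\neq0\}$ and $D_\kappa=\{(i,j)\in[\ell]\times[q]:[\mathbf{B}_\kappa]_{ij}\neq0\}$. Then $$\mathrm{card}\Bigl(\bigcup_{k=1}^p C_k\Bigr)=\sum_{\kappa=1}^\rho\xi_\kappa,\qquad \mathrm{card}\Bigl(\bigcup_{\kappa=1}^\rho D_\kappa\Bigr)=\sum_{k=1}^p\eta_k.$$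
   Context: Blocks of $\mathbf{A}$: $\mathbf{A}^{(\gamma,\delta)}_{\alpha\beta}=\mathbf{A}_{(\gamma-1)m+\alpha,(\delta-1)n+\beta}$ for $(\gamma,\delta)\in[\ell]\times[q]$, $(\alpha,\beta)\in[m]\times[n]$. Blocks of $\mathbf{B}$: $\mathbf{B}^{(\alpha,\beta)}_{\gamma\delta}=\mathbf{B}_{(\alpha-1)\ell+\gamma,(\beta-1)q+\delta}$. For $a,b\ge1$, $s=ab$, the shuffle permutation matrix $\mathbf{S}_{a,b}\in\mathbb{R}^{s\times s}$ has row $(i-1)a+j$ equal to $\mathbf{e}_{(j-1)b+i}^\top$ ($i\in[b]$, $j\in[a]$). "Distinct blocks" means the set of distinct nonzero matrices occurring among the blocks; zero blocks are not counted. *)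

theory Defs
  imports "Jordan_Normal_Form.Matrix"
begin

text \<open>Indices are 0-based: the paper's index i in [a] corresponds to i-1 in {0..<a}.\<close>

text \<open>Shuffle permutation matrix S_{a,b} (size ab x ab): row i*a+j (i<b, j<a) is e_{j*b+i}^T.\<close>
definition shuffle_mat :: "nat \<Rightarrow> nat \<Rightarrow> real mat" where
  "shuffle_mat a b = mat (a*b) (a*b) (\<lambda>(r,c). if c = (r mod a) * b + r div a then 1 else 0)"

definition blk :: "real mat \<Rightarrow> nat \<Rightarrow> nat \<Rightarrow> nat \<Rightarrow> nat \<Rightarrow> real mat" where
  "blk M r c i j = mat r c (\<lambda>(a,b). M $$ (i*r+a, j*c+b))"

definition distinct_blocks :: "real mat \<Rightarrow> nat \<Rightarrow> nat \<Rightarrow> nat \<Rightarrow> nat \<Rightarrow> real mat set" where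
  "distinct_blocks M u v r c =
     {blk M r c i j | i j. i < u \<and> j < v} - {0\<^sub>m r c}"

definition occurrences :: "real mat \<Rightarrow> nat \<Rightarrow> nat \<Rightarrow> nat \<Rightarrow> nat \<Rightarrow> real mat \<Rightarrow> nat" where
  "occurrences M u v r c X = card {(i,j). i < u \<and> j < v \<and> blk M r c i j = X}"

definition supp_mat :: "real mat \<Rightarrow> (nat \<times> nat) set" where
  "supp_mat X = {(i,j). i < dim_row X \<and> j < dim_col X \<and> X $$ (i,j) \<noteq> 0}"

end

theory Submission
  imports Defs
begin

text \<open>
  Conjugating by the shuffle matrices interchanges block index and index within a block:
  the entry of B at position (\<gamma>, \<delta>) of block (\<alpha>, \<beta>) is the entry of A at
  position (\<alpha>, \<beta>) of block (\<gamma>, \<delta>). Hence (\<alpha>, \<beta>) lies in the support of some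
  nonzero block of A exactly when the block of B at (\<alpha>, \<beta>) is nonzero. On the other
  hand, summing the multiplicities of the distinct nonzero blocks of a matrix counts
  its nonzero block positions. Both identities follow, by symmetry.
\<close>

lemma mixed_radix_less:
  fixes i j a b :: nat
  assumes "i < b" "j < a"
  shows "i * a + j < a * b"
proof -
  have "i * a + j < (i + 1) * a" using assms(2) by simp
  also have "\<dots> \<le> b * a" using assms(1) by (intro mult_right_mono) auto
  finally show ?thesis by (simp add: mult.commute)
qed

lemma carrier_shuffle_mat: "shuffle_mat a b \<in> carrier_mat (a * b) (a * b)"
  by (simp add: shuffle_mat_def)

lemma row_shuffle_mat:
  assumes "i < b" "j < a"
  shows "row (shuffle_mat a b) (i * a + j) = unit_vec (a * b) (j * b + i)"
  using assms mixed_radix_less[OF assms]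
  by (intro eq_vecI) (auto simp: shuffle_mat_def unit_vec_def)

lemma shuffle_mat_mult_index:
  assumes M: "M \<in> carrier_mat (a * b) k" and "i < b" "j < a" "c < k"
  shows "(shuffle_mat a b * M) $$ (i * a + j, c) = M $$ (j * b + i, c)"
proof -
  have "(shuffle_mat a b * M) $$ (i * a + j, c) = unit_vec (a * b) (j * b + i) \<bullet> col M c"
    using assms mixed_radix_less[OF assms(2,3)]
    by (simp add: row_shuffle_mat carrier_shuffle_mat[THEN carrier_matD(1)])
  also have "\<dots> = M $$ (j * b + i, c)"
    using assms mixed_radix_less[OF assms(3,2)] by (simp add: mult.commute)
  finally show ?thesis .
qed

lemma mult_transpose_shuffle_mat_index:
  assumes M: "M \<in> carrier_mat k (a * b)" and "r < k" "i < b" "j < a"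
  shows "(M * transpose_mat (shuffle_mat a b)) $$ (r, i * a + j) = M $$ (r, j * b + i)"
proof -
  have "(M * transpose_mat (shuffle_mat a b)) $$ (r, i * a + j) = row M r \<bullet> unit_vec (a * b) (j * b + i)"
    using assms mixed_radix_less[OF assms(3,4)]
    by (simp add: row_shuffle_mat carrier_shuffle_mat[THEN carrier_matD(1)])
  also have "\<dots> = M $$ (r, j * b + i)"
    using assms mixed_radix_less[OF assms(4,3)] by (simp add: mult.commute)
  finally show ?thesis .
qed

lemma shuffle_conjugate_index:
  assumes A: "A \<in> carrier_mat (l * m) (q * n)"
    and "\<alpha> < m" "\<beta> < n" "\<gamma> < l" "\<delta> < q"
  shows "(shuffle_mat l m * A * transpose_mat (shuffle_mat q n)) $$ (\<alpha> * l + \<gamma>, \<beta> * q + \<delta>)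
         = A $$ (\<gamma> * m + \<alpha>, \<delta> * n + \<beta>)"
proof -
  have SA: "shuffle_mat l m * A \<in> carrier_mat (l * m) (q * n)"
    using A carrier_shuffle_mat by (rule mult_carrier_mat[rotated])
  have "(shuffle_mat l m * A * transpose_mat (shuffle_mat q n)) $$ (\<alpha> * l + \<gamma>, \<beta> * q + \<delta>)
        = (shuffle_mat l m * A) $$ (\<alpha> * l + \<gamma>, \<delta> * n + \<beta>)"
    using assms mixed_radix_less[of \<alpha> m \<gamma> l]
    by (intro mult_transpose_shuffle_mat_index[OF SA]) auto
  also have "\<dots> = A $$ (\<gamma> * m + \<alpha>, \<delta> * n + \<beta>)"
    using assms mixed_radix_less[of \<delta> q \<beta> n]
    by (intro shuffle_mat_mult_index[OF A]) (auto simp: mult.commute)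
  finally show ?thesis .
qed

lemma blk_neq_zero_iff:
  "blk M r c i j \<noteq> 0\<^sub>m r c \<longleftrightarrow> (\<exists>a<r. \<exists>b<c. M $$ (i * r + a, j * c + b) \<noteq> 0)"
  unfolding blk_def by (auto simp: mat_eq_iff)

lemma sum_occurrences_distinct_blocks:
  "(\<Sum>Y \<in> distinct_blocks M u v r c. occurrences M u v r c Y)
     = card {(i, j). i < u \<and> j < v \<and> blk M r c i j \<noteq> 0\<^sub>m r c}"
proof -
  let ?pos = "\<lambda>Y. {(i, j). i < u \<and> j < v \<and> blk M r c i j = Y}"
  have "finite (distinct_blocks M u v r c)"
  proof -
    have "{blk M r c i j | i j. i < u \<and> j < v} = (\<lambda>(i, j). blk M r c i j) ` ({..<u} \<times> {..<v})"
      by auto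
    then show ?thesis unfolding distinct_blocks_def by simp
  qed
  moreover have "finite (?pos Y)" for Y
    by (rule finite_subset[of _ "{..<u} \<times> {..<v}"]) auto
  ultimately have "(\<Sum>Y \<in> distinct_blocks M u v r c. card (?pos Y))
      = card (\<Union>Y \<in> distinct_blocks M u v r c. ?pos Y)"
    by (intro card_UN_disjoint[symmetric]) auto
  also have "(\<Union>Y \<in> distinct_blocks M u v r c. ?pos Y)
      = {(i, j). i < u \<and> j < v \<and> blk M r c i j \<noteq> 0\<^sub>m r c}"
    unfolding distinct_blocks_def by auto
  finally show ?thesis unfolding occurrences_def .
qed

lemma UN_supp_mat_distinct_blocks:
  "(\<Union>X \<in> distinct_blocks M u v r c. supp_mat X)
    = {(a, b). a < r \<and> b < c \<and> (\<exists>i<u. \<exists>j<v. M $$ (i * r + a, j * c + b) \<noteq> 0)}"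
  (is "?L = ?R")
proof
  show "?L \<subseteq> ?R"
    unfolding distinct_blocks_def supp_mat_def blk_def by auto
next
  show "?R \<subseteq> ?L"
  proof clarify
    fix a b i j
    assume ab: "a < r" "b < c" and "i < u" "j < v"
      and nz: "M $$ (i * r + a, j * c + b) \<noteq> 0"
    then have "blk M r c i j \<in> distinct_blocks M u v r c"
      unfolding distinct_blocks_def using blk_neq_zero_iff by blast
    moreover have "(a, b) \<in> supp_mat (blk M r c i j)"
      using ab nz unfolding supp_mat_def blk_def by simp
    ultimately show "(a, b) \<in> ?L" by blast
  qed
qed

lemma card_UN_supp_distinct_blocks_eq_sum_occurrences:
  assumes swap: "\<And>i j a b. i < u \<Longrightarrow> j < v \<Longrightarrow> a < r \<Longrightarrow> b < c \<Longrightarrow>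
      N $$ (a * u + i, b * v + j) = M $$ (i * r + a, j * c + b)"
  shows "card (\<Union>X \<in> distinct_blocks M u v r c. supp_mat X)
       = (\<Sum>Y \<in> distinct_blocks N r c u v. occurrences N r c u v Y)"
proof -
  have "(\<exists>i<u. \<exists>j<v. M $$ (i * r + a, j * c + b) \<noteq> 0) \<longleftrightarrow> blk N u v a b \<noteq> 0\<^sub>m u v"
    if "a < r" "b < c" for a b
    unfolding blk_neq_zero_iff using that by (metis swap)
  then have "(\<Union>X \<in> distinct_blocks M u v r c. supp_mat X)
      = {(a, b). a < r \<and> b < c \<and> blk N u v a b \<noteq> 0\<^sub>m u v}"
    unfolding UN_supp_mat_distinct_blocks by blast
  then show ?thesis
    by (simp add: sum_occurrences_distinct_blocks)
qed

theorem theorem4: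
  fixes A :: "real mat" and l q m n :: nat
  assumes "l \<ge> 1" "q \<ge> 1" "m \<ge> 1" "n \<ge> 1"
    and "A \<in> carrier_mat (l*m) (q*n)"
  defines "B \<equiv> shuffle_mat l m * A * transpose_mat (shuffle_mat q n)"
  shows "card (\<Union>X \<in> distinct_blocks A l q m n. supp_mat X)
           = (\<Sum>Y \<in> distinct_blocks B m n l q. occurrences B m n l q Y)
       \<and> card (\<Union>Y \<in> distinct_blocks B m n l q. supp_mat Y)
           = (\<Sum>X \<in> distinct_blocks A l q m n. occurrences A l q m n X)"
  using shuffle_conjugate_index[OF assms(5)]
  unfolding B_def
  by (auto intro!: card_UN_supp_distinct_blocks_eq_sum_occurrences)

end
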